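(* Let $r\ge1$ and $G\subset\mathbb{Z}_2^r$ a subgroup with $1^r\in G$, $S_G$ as below. Then $\dim_{\mathbb{C}}S_G=2^{2r-\dim G}P_G(\tfrac12)$, where $P_G(t)=\sum_{k=0}^r N_k(G)t^k$ and $N_k(G)=\#\{g\in G: g \text{ has exactly } k \text{ nonzero coordinates}\}$ ($\dim G$ is the $\mathbb{Z}_2$-dimension).
   Context: For $c\in\mathbb{Z}_2^{r+r}$, $|c|_l,|c|_r$ are the numbers of ones among the first/last $r$ coordinates, $|c|=|c|_l-|c|_r$ (componentwise products of codewords), $d_\perp=1^{2r}+d$, $\mathbb{Z}_2^d=\{\alpha:d\alpha=\alpha\}$, $A^\perp=\{\beta:|\beta a|\in2\mathbb{Z}\ \forall a\in A\}$. $\Delta(g)=(g,g)$; $D_G=\Delta G$, $C_G=D_G^\perp$. $C^{\rm even}_{r,r}=\{\alpha:|\alpha|\in2\mathbb{Z}\}$ with ordered basis $(v_1,\dots,v_{2r-1})=(\Delta e_1,\dots,\Delta e_r,\tilde e_1-\tilde e_2,\dots,\tilde e_{r-1}-\tilde e_r)$, $\tilde e_i=(e_i,0)$; $\varepsilon$ bimultiplicative to $\{\pm1\}$ with $\varepsilon(v_i,v_i)=(-1)^{|v_i|/2}$, $\varepsilon(v_i,v_j)=1$ ($i<j$), $(-1)^{|v_iv_j|}$ ($i>j$). $\mathbb{C}[\hat C_G]$: basis $e_\alpha$ ($\alpha\in C_G$), $e_\alpha e_\beta=\varepsilon(\alpha,\beta)e_{\alpha+\beta}$. For $d\in\Delta\mathbb{Z}_2^r$,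 $\Delta^d=\mathbb{Z}_2^d\cap\Delta\mathbb{Z}_2^r$, with $\{e_\gamma\}_{\gamma\in\Delta^d}$ spanning a copy of the group algebra $\mathbb{C}[\Delta^d]$. For $d\in D_G$, $A_G(d)=\mathbb{C}[\hat C_G]\otimes_{\mathbb{C}[\Delta^d]}\mathbb{C}t_d$ (trivial module) and $S_G=\bigoplus_{d\in D_G}A_G(d)$. *)

theory Defs
  imports Complex_Main "HOL-Library.Function_Algebras"
begin

text \<open>A codeword c in Z_2^(r+r) is the set of positions where it is 1; positions
  0..r-1 are the left half, positions r..2r-1 the right half.  Addition is
  symmetric difference, the componentwise product is intersection.\<close>

definition cw_add :: "nat set \<Rightarrow> nat set \<Rightarrow> nat set" where
  "cw_add a b = (a - b) \<union> (b - a)"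

definition wl :: "nat \<Rightarrow> nat set \<Rightarrow> nat" where
  "wl r c = card (c \<inter> {..<r})"

definition wr :: "nat \<Rightarrow> nat set \<Rightarrow> nat" where
  "wr r c = card (c \<inter> {r..<2*r})"

definition wt :: "nat \<Rightarrow> nat set \<Rightarrow> int" where
  "wt r c = int (wl r c) - int (wr r c)"

definition Dlt :: "nat \<Rightarrow> nat set \<Rightarrow> nat set" where
  "Dlt r g = g \<union> ((+) r) ` g"

definition xsum :: "nat set set \<Rightarrow> nat set" where
  "xsum S = {i. odd (card {c \<in> S. i \<in> c})}"

definition z2_subgroup :: "nat \<Rightarrow> nat set set \<Rightarrow> bool" where
  "z2_subgroup r G \<longleftrightarrow> G \<subseteq> Pow {..<r} \<and> {} \<in> G \<and> (\<forall>a\<in>G. \<forall>b\<in>G. cw_add a b \<in> G)"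

definition z2_span :: "nat set set \<Rightarrow> nat set set" where
  "z2_span B = {xsum S | S. S \<subseteq> B \<and> finite S}"

definition z2_dim :: "nat set set \<Rightarrow> nat" where
  "z2_dim G = Min {card B | B. B \<subseteq> G \<and> finite B \<and> z2_span B = G}"

definition Nk :: "nat set set \<Rightarrow> nat \<Rightarrow> nat" where
  "Nk G k = card {g \<in> G. card g = k}"

definition PG :: "nat \<Rightarrow> nat set set \<Rightarrow> real \<Rightarrow> real" where
  "PG r G t = (\<Sum>k=0..r. real (Nk G k) * t ^ k)"

definition DG :: "nat \<Rightarrow> nat set set \<Rightarrow> nat set set" where
  "DG r G = Dlt r ` G"

definition perp :: "nat \<Rightarrow> nat set set \<Rightarrow> nat set set" where
  "perp r A = {\<beta>. \<beta> \<subseteq> {..<2*r} \<and> (\<forall>a\<in>A. even (wt r (\<beta> \<inter> a)))}"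

definition CG :: "nat \<Rightarrow> nat set set \<Rightarrow> nat set set" where
  "CG r G = perp r (DG r G)"

definition Ceven :: "nat \<Rightarrow> nat set set" where
  "Ceven r = {\<alpha>. \<alpha> \<subseteq> {..<2*r} \<and> even (wt r \<alpha>)}"

text \<open>Ordered basis v_0,...,v_(2r-2) of C^even (0-indexed):
  v_i = Delta e_i for i < r, and v_(r+j) = e~_j - e~_(j+1) for j < r-1.\<close>
definition vb :: "nat \<Rightarrow> nat \<Rightarrow> nat set" where
  "vb r i = (if i < r then Dlt r {i} else {i - r, i - r + 1})"

definition sgnpow :: "int \<Rightarrow> complex" where
  "sgnpow k = (if even k then 1 else -1)"

definition eps0 :: "nat \<Rightarrow> nat \<Rightarrow> nat \<Rightarrow> complex" where
  "eps0 r i j =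
     (if i = j then sgnpow (wt r (vb r i) div 2)
      else if i < j then 1
      else sgnpow (wt r (vb r i \<inter> vb r j)))"

definition coords :: "nat \<Rightarrow> nat set \<Rightarrow> nat set" where
  "coords r \<alpha> = (THE S. S \<subseteq> {..<2*r-1} \<and> xsum (vb r ` S) = \<alpha>)"

definition eps :: "nat \<Rightarrow> nat set \<Rightarrow> nat set \<Rightarrow> complex" where
  "eps r \<alpha> \<beta> = (\<Prod>i\<in>coords r \<alpha>. \<Prod>j\<in>coords r \<beta>. eps0 r i j)"

text \<open>Elements of C[C_G^]: functions C_G -> C (extended by 0), x = sum_alpha x(alpha) e_alpha.\<close>
definition cscale :: "complex \<Rightarrow> (nat set \<Rightarrow> complex) \<Rightarrow> (nat set \<Rightarrow> complex)" where
  "cscale c f = (\<lambda>x. c * f x)"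

definition TA :: "nat \<Rightarrow> nat set set \<Rightarrow> (nat set \<Rightarrow> complex) set" where
  "TA r G = {f. \<forall>x. x \<notin> CG r G \<longrightarrow> f x = 0}"

definition e_el :: "nat set \<Rightarrow> (nat set \<Rightarrow> complex)" where
  "e_el \<gamma> = (\<lambda>x. if x = \<gamma> then 1 else 0)"

text \<open>Product with e_alpha e_beta = eps(alpha,beta) e_(alpha+beta)\<close>
definition tmult :: "nat \<Rightarrow> nat set set \<Rightarrow> (nat set \<Rightarrow> complex) \<Rightarrow> (nat set \<Rightarrow> complex) \<Rightarrow> (nat set \<Rightarrow> complex)" where
  "tmult r G f g = (\<lambda>\<gamma>. if \<gamma> \<in> CG r G then
      (\<Sum>\<alpha>\<in>CG r G. eps r \<alpha> (cw_add \<gamma> \<alpha>) * f \<alpha> * g (cw_add \<gamma> \<alpha>)) else 0)"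

definition Delta_d :: "nat \<Rightarrow> nat set \<Rightarrow> nat set set" where
  "Delta_d r d = {\<alpha>. \<alpha> \<subseteq> d} \<inter> Dlt r ` Pow {..<r}"

text \<open>A_G(d) = C[C_G^] \<otimes>_(C[Delta^d]) C t_d with the trivial module C t_d is the
  quotient of C[C_G^] by the span of the relations x e_gamma - x (gamma in Delta^d).\<close>
definition rel_A :: "nat \<Rightarrow> nat set set \<Rightarrow> nat set \<Rightarrow> (nat set \<Rightarrow> complex) set" where
  "rel_A r G d = module.span cscale
     {tmult r G x (e_el \<gamma>) - x | x \<gamma>. x \<in> TA r G \<and> \<gamma> \<in> Delta_d r d}"

definition dim_A :: "nat \<Rightarrow> nat set set \<Rightarrow> nat set \<Rightarrow> nat" where
  "dim_A r G d = vector_space.dim cscale (TA r G) - vector_space.dim cscale (rel_A r G d)"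

text \<open>S_G = direct sum over d in D_G of A_G(d)\<close>
definition dim_S :: "nat \<Rightarrow> nat set set \<Rightarrow> nat" where
  "dim_S r G = (\<Sum>d\<in>DG r G. dim_A r G d)"

end

theory Submission
  imports Defs
begin

(* Write d = Delta g with g in G. Then Delta^d = Delta(2^g) has 2^|g| elements, and
   epsilon(gamma, _) = 1 for gamma in Delta Z_2^r. Rescaling the basis e_alpha of C[C_G^]
   to epsilon(alpha, alpha) e_alpha turns the relations x e_gamma = x (gamma in Delta^d)
   into identifications of basis vectors within a coset of Delta^d, so
   dim A_G(Delta g) = |C_G| / 2^|g|. Bimultiplicativity of epsilon is available because
   1^r in G forces C_G into C^even, and |C_G| = 2^(2r) / |D_G| = 2^(2r - dim G) by a
   character-sum count of dual codes. Summing over g in G gives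
   |C_G| * sum_g 2^(-|g|) = 2^(2r - dim G) P_G(1/2). *)

section \<open>Symmetric difference\<close>

lemma cw_add_comm: "cw_add a b = cw_add b a"
  unfolding cw_add_def by auto

lemma cw_add_self [simp]: "cw_add a a = {}"
  and cw_add_empty [simp]: "cw_add a {} = a" "cw_add {} a = a"
  and cw_add_cancel [simp]: "cw_add a (cw_add a b) = b" "cw_add (cw_add b a) a = b"
  unfolding cw_add_def by auto

lemma cw_add_eq_iff: "cw_add a b = c \<longleftrightarrow> b = cw_add a c"
  unfolding cw_add_def by auto

lemma cw_add_Int: "cw_add a b \<inter> X = cw_add (a \<inter> X) (b \<inter> X)"
  unfolding cw_add_def by auto

lemma cw_add_subset: "a \<subseteq> X \<Longrightarrow> b \<subseteq> X \<Longrightarrow> cw_add a b \<subseteq> X"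
  unfolding cw_add_def by auto

lemma card_sym_diff:
  assumes "finite A" "finite B"
  shows "card (sym_diff A B) + 2 * card (A \<inter> B) = card A + card B"
proof -
  have "sym_diff A B = (A \<union> B) - (A \<inter> B)"
    by auto
  then have "card (sym_diff A B) = card (A \<union> B) - card (A \<inter> B)"
    using assms by (simp only:) (intro card_Diff_subset, auto)
  moreover have "card (A \<inter> B) \<le> card (A \<union> B)"
    using assms by (intro card_mono) auto
  ultimately show ?thesis
    using card_Un_Int[OF assms] by simp
qed

lemma even_card_sym_diff:
  assumes "finite A" "finite B"
  shows "even (card (sym_diff A B)) \<longleftrightarrow> (even (card A) \<longleftrightarrow> even (card B))"
  using card_sym_diff[OF assms] by (metis even_add even_mult_iff even_numeral)

lemma even_card_cw_add:
  "finite a \<Longrightarrow> finite b \<Longrightarrow> even (card (cw_add a b)) \<longleftrightarrow> (even (card a) \<longleftrightarrow> even (card b))"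
  unfolding cw_add_def by (rule even_card_sym_diff)

lemma xsum_insert:
  assumes "finite S" "x \<notin> S"
  shows "xsum (insert x S) = cw_add x (xsum S)"
proof -
  have "{c \<in> insert x S. i \<in> c} = (if i \<in> x then insert x {c \<in> S. i \<in> c} else {c \<in> S. i \<in> c})" for i
    by auto
  then show ?thesis
    using assms unfolding xsum_def cw_add_def by auto
qed

lemma xsum_singleton [simp]: "xsum {x} = x"
  using xsum_insert[of "{}" x] by (simp add: xsum_def)

lemma xsum_sym_diff:
  assumes "finite S" "finite T"
  shows "xsum (sym_diff S T) = cw_add (xsum S) (xsum T)"
proof -
  have "{c \<in> sym_diff S T. i \<in> c}
      = ({c \<in> S. i \<in> c} - {c \<in> T. i \<in> c}) \<union> ({c \<in> T. i \<in> c} - {c \<in> S. i \<in> c})" for i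
    by auto
  then show ?thesis
    using assms even_card_sym_diff[of "{c \<in> S. _ \<in> c}" "{c \<in> T. _ \<in> c}"]
    unfolding xsum_def cw_add_def by auto
qed

lemma minus_one_power_card_cw_add:
  assumes "finite a" "finite b"
  shows "(-1::real) ^ card (cw_add a b) = (-1) ^ card a * (-1) ^ card b"
  using even_card_cw_add[OF assms] by (simp add: minus_one_power_iff)

section \<open>Subgroups of \<open>Z_2^n\<close> and their duals\<close>

lemma z2_subgroup_xsum:
  assumes "z2_subgroup n H" "finite S" "S \<subseteq> H"
  shows "xsum S \<in> H"
  using assms(2,3)
proof (induction S rule: finite_induct)
  case empty
  then show ?case
    using assms(1) by (simp add: xsum_def z2_subgroup_def)
next
  case (insert x F)
  then show ?case
    using assms(1) by (simp add: xsum_insert z2_subgroup_def)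
qed

lemma z2_span_subgroup: "z2_subgroup n H \<Longrightarrow> z2_span H = H"
  unfolding z2_span_def
  by (auto intro: z2_subgroup_xsum intro!: exI[of _ "{_}"])

lemma z2_span_finite: "finite B \<Longrightarrow> z2_span B = xsum ` Pow B"
  unfolding z2_span_def by (auto intro: finite_subset)

text \<open>Any \<open>b \<in> sym_diff S T\<close> is redundant: if \<open>b \<in> X\<close>, then \<open>xsum X\<close> is also the
  sum of \<open>sym_diff X (sym_diff S T)\<close>, which avoids \<open>b\<close>.\<close>

lemma z2_span_remove_dependent:
  assumes "finite B" "S \<subseteq> B" "T \<subseteq> B" "S \<noteq> T" "xsum S = xsum T"
  obtains b where "b \<in> B" "z2_span (B - {b}) = z2_span B"
proof -
  define U where "U = sym_diff S T"
  have fin: "finite S" "finite T" "finite U"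
    using assms(1-3) unfolding U_def by (auto intro: finite_subset)
  have U0: "xsum U = {}"
    unfolding U_def using xsum_sym_diff[OF fin(1,2)] assms(5) by simp
  obtain b where bU: "b \<in> U"
    using assms(4) unfolding U_def by auto
  have UB: "U \<subseteq> B"
    using assms(2,3) unfolding U_def by auto
  have "xsum X \<in> z2_span (B - {b})" if "X \<subseteq> B" for X
  proof (cases "b \<in> X")
    case True
    have "xsum (sym_diff X U) = xsum X"
      using xsum_sym_diff[of X U] U0 that fin(3) assms(1) finite_subset by auto
    moreover have "sym_diff X U \<subseteq> B - {b}"
      using True bU that UB by auto
    ultimately show ?thesis
      using assms(1) finite_subset unfolding z2_span_def by (metis (mono_tags, lifting) CollectI finite_Diff)
  next
    case False
    then show ?thesis
      using that assms(1) finite_subset unfolding z2_span_def by blast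
  qed
  then have "z2_span B \<subseteq> z2_span (B - {b})"
    using z2_span_finite[OF assms(1)] by auto
  moreover have "z2_span (B - {b}) \<subseteq> z2_span B"
    unfolding z2_span_def by auto
  ultimately show thesis
    using that bU UB by blast
qed

lemma card_z2_subgroup:
  assumes H: "z2_subgroup n H"
  shows "card H = 2 ^ z2_dim H"
proof -
  define M where "M = {card B | B. B \<subseteq> H \<and> finite B \<and> z2_span B = H}"
  have fin: "finite H"
    using H unfolding z2_subgroup_def by (meson finite_Pow_iff finite_lessThan finite_subset)
  have "card H \<in> M"
    unfolding M_def using fin z2_span_subgroup[OF H] by blast
  moreover have fin_M: "finite M"
    unfolding M_def using fin by (auto intro: finite_subset[of _ "card ` Pow H"])
  ultimately have "z2_dim H \<in> M"
    unfolding z2_dim_def M_def[symmetric] by (intro Min_in) auto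
  have dim_le: "z2_dim H \<le> card B" if "B \<subseteq> H" "finite B" "z2_span B = H" for B
    unfolding z2_dim_def M_def[symmetric] by (rule Min_le[OF fin_M]) (use that in \<open>auto simp: M_def\<close>)
  from \<open>z2_dim H \<in> M\<close> obtain B where B: "B \<subseteq> H" "finite B" "z2_span B = H" "card B = z2_dim H"
    unfolding M_def by auto
  have "inj_on xsum (Pow B)"
  proof (rule inj_onI, rule ccontr)
    fix S T
    assume "S \<in> Pow B" "T \<in> Pow B" "xsum S = xsum T" "S \<noteq> T"
    then obtain b where b: "b \<in> B" "z2_span (B - {b}) = H"
      using z2_span_remove_dependent[OF B(2)] B(3) by blast
    then have "z2_dim H \<le> card (B - {b})"
      using B by (intro dim_le) auto
    then show False
      using B(2,4) b(1) card_Diff1_less[of B b] by simp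
  qed
  then have "card H = card (Pow B)"
    using B(2,3) z2_span_finite by (metis card_image)
  then show ?thesis
    using B(2,4) by (simp add: card_Pow)
qed

definition z2_perp :: "nat \<Rightarrow> nat set set \<Rightarrow> nat set set" where
  "z2_perp n H = {\<beta>. \<beta> \<subseteq> {..<n} \<and> (\<forall>h\<in>H. even (card (\<beta> \<inter> h)))}"

lemma z2_subgroup_perp: "z2_subgroup n (z2_perp n H)"
  unfolding z2_subgroup_def z2_perp_def
  by (auto simp: cw_add_subset cw_add_Int finite_subset even_card_cw_add)

lemma sum_eq_0_sign_reversing_involution:
  fixes g :: "'a \<Rightarrow> real"
  assumes "\<And>x. x \<in> A \<Longrightarrow> \<sigma> x \<in> A" "\<And>x. x \<in> A \<Longrightarrow> \<sigma> (\<sigma> x) = x"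
    and "\<And>x. x \<in> A \<Longrightarrow> g (\<sigma> x) = - g x"
  shows "sum g A = 0"
proof -
  have "sum g A = sum (g \<circ> \<sigma>) A"
    by (rule sum.reindex_bij_witness[of _ \<sigma> \<sigma>]) (use assms in auto)
  also have "\<dots> = - sum g A"
    using assms(3) by (simp add: sum_negf)
  finally show ?thesis
    by simp
qed

lemma sum_character_subgroup:
  assumes H: "z2_subgroup n H" and \<beta>: "\<beta> \<subseteq> {..<n}"
  shows "(\<Sum>h\<in>H. (-1::real) ^ card (\<beta> \<inter> h)) = (if \<beta> \<in> z2_perp n H then real (card H) else 0)"
proof (cases "\<beta> \<in> z2_perp n H")
  case True
  then show ?thesis
    unfolding z2_perp_def by simp
next
  case False
  then obtain h0 where h0: "h0 \<in> H" "odd (card (\<beta> \<inter> h0))"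
    using \<beta> unfolding z2_perp_def by auto
  have "(\<Sum>h\<in>H. (-1::real) ^ card (\<beta> \<inter> h)) = 0"
  proof (rule sum_eq_0_sign_reversing_involution[where \<sigma> = "cw_add h0"])
    fix h
    assume "h \<in> H"
    then show "(-1::real) ^ card (\<beta> \<inter> cw_add h0 h) = - ((-1) ^ card (\<beta> \<inter> h))"
      using h0 finite_subset[OF \<beta>] by (simp add: Int_commute[of \<beta>] cw_add_Int minus_one_power_card_cw_add)
  qed (use H h0 in \<open>auto simp: z2_subgroup_def\<close>)
  then show ?thesis
    using False by simp
qed

lemma sum_character_Pow:
  assumes "h \<subseteq> {..<n}"
  shows "(\<Sum>\<beta>\<in>Pow {..<n}. (-1::real) ^ card (\<beta> \<inter> h)) = (if h = {} then 2 ^ n else 0)"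
proof (cases "h = {}")
  case True
  then show ?thesis
    by (simp add: card_Pow)
next
  case False
  then obtain i where i: "i \<in> h"
    by auto
  have "(\<Sum>\<beta>\<in>Pow {..<n}. (-1::real) ^ card (\<beta> \<inter> h)) = 0"
  proof (rule sum_eq_0_sign_reversing_involution[where \<sigma> = "cw_add {i}"])
    fix \<beta>
    assume "\<beta> \<in> Pow {..<n}"
    then show "(-1::real) ^ card (cw_add {i} \<beta> \<inter> h) = - ((-1) ^ card (\<beta> \<inter> h))"
      using i finite_subset[of \<beta> "{..<n}"] by (simp add: cw_add_Int minus_one_power_card_cw_add)
  qed (use i assms in \<open>auto simp: cw_add_def\<close>)
  then show ?thesis
    using False by simp
qed

text \<open>Double counting of the character sum \<open>\<Sum>\<^sub>\<beta> \<Sum>\<^sub>h (-1)^|\<beta> h|\<close>.\<close>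

lemma card_z2_perp:
  assumes H: "z2_subgroup n H"
  shows "card (z2_perp n H) * card H = 2 ^ n"
proof -
  have HP: "H \<subseteq> Pow {..<n}" "{} \<in> H"
    using H unfolding z2_subgroup_def by auto
  then have fin: "finite H"
    by (meson finite_Pow_iff finite_lessThan finite_subset)
  have "{\<beta> \<in> Pow {..<n}. \<beta> \<in> z2_perp n H} = z2_perp n H"
    unfolding z2_perp_def by auto
  moreover have "finite (Pow {..<n})"
    by simp
  ultimately have "real (card (z2_perp n H)) * real (card H)
      = (\<Sum>\<beta>\<in>Pow {..<n}. if \<beta> \<in> z2_perp n H then real (card H) else 0)"
    using sum.inter_filter[of "Pow {..<n}" "\<lambda>_. real (card H)" "\<lambda>\<beta>. \<beta> \<in> z2_perp n H"] by simp
  also have "\<dots> = (\<Sum>\<beta>\<in>Pow {..<n}. \<Sum>h\<in>H. (-1::real) ^ card (\<beta> \<inter> h))"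
    using sum_character_subgroup[OF H] by simp
  also have "\<dots> = (\<Sum>h\<in>H. \<Sum>\<beta>\<in>Pow {..<n}. (-1::real) ^ card (\<beta> \<inter> h))"
    by (rule sum.swap)
  also have "\<dots> = (\<Sum>h\<in>H. if h = {} then 2 ^ n else 0)"
    using sum_character_Pow HP(1) by (intro sum.cong refl) (meson PowD subsetD)
  also have "\<dots> = 2 ^ n"
    using HP(2) fin by simp
  finally have "real (card (z2_perp n H) * card H) = real (2 ^ n)"
    by simp
  then show ?thesis
    by (simp only: of_nat_eq_iff)
qed

section \<open>The diagonal map and the codes \<open>D_G\<close>, \<open>C_G\<close>\<close>

lemma Dlt_subset: "g \<subseteq> {..<r} \<Longrightarrow> Dlt r g \<subseteq> {..<2*r}"
  unfolding Dlt_def by auto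

lemma Dlt_Int_lessThan: "g \<subseteq> {..<r} \<Longrightarrow> Dlt r g \<inter> {..<r} = g"
  unfolding Dlt_def by auto

lemma inj_on_Dlt: "inj_on (Dlt r) (Pow {..<r})"
  by (rule inj_onI) (metis Dlt_Int_lessThan PowD)

lemma Dlt_empty [simp]: "Dlt r {} = {}"
  unfolding Dlt_def by simp

lemma Dlt_cw_add: "a \<subseteq> {..<r} \<Longrightarrow> b \<subseteq> {..<r} \<Longrightarrow> Dlt r (cw_add a b) = cw_add (Dlt r a) (Dlt r b)"
  unfolding Dlt_def cw_add_def by auto

lemma Dlt_Int: "a \<subseteq> {..<r} \<Longrightarrow> b \<subseteq> {..<r} \<Longrightarrow> Dlt r a \<inter> Dlt r b = Dlt r (a \<inter> b)"
  unfolding Dlt_def by auto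

lemma Dlt_subset_Dlt_iff: "a \<subseteq> {..<r} \<Longrightarrow> b \<subseteq> {..<r} \<Longrightarrow> Dlt r a \<subseteq> Dlt r b \<longleftrightarrow> a \<subseteq> b"
  unfolding Dlt_def by auto

lemma Dlt_lessThan: "Dlt r {..<r} = {..<2*r}"
proof -
  have "x \<in> (+) r ` {..<r}" if "r \<le> x" "x < 2*r" for x
    using that by (intro image_eqI[of x _ "x - r"]) auto
  then show ?thesis
    unfolding Dlt_def by (auto simp: not_less) (meson not_less)
qed

lemma card_Dlt:
  assumes "g \<subseteq> {..<r}"
  shows "card (Dlt r g) = 2 * card g"
proof -
  have "finite g" "g \<inter> (+) r ` g = {}"
    using assms finite_subset by auto
  then show ?thesis
    unfolding Dlt_def by (simp add: card_Un_disjoint card_image)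
qed

lemma even_wt_iff:
  assumes "\<beta> \<subseteq> {..<2*r}"
  shows "even (wt r \<beta>) \<longleftrightarrow> even (card \<beta>)"
proof -
  have "\<beta> - {..<r} = \<beta> \<inter> {r..<2*r}"
    using assms by auto
  then have "card \<beta> = wl r \<beta> + wr r \<beta>"
    unfolding wl_def wr_def using card_Int_Diff[OF finite_subset[OF assms], of "{..<r}"] by simp
  then show ?thesis
    unfolding wt_def by simp
qed

lemma perp_eq_z2_perp: "perp r A = z2_perp (2*r) A"
  unfolding perp_def z2_perp_def using even_wt_iff[of "_ \<inter> _" r] by blast

lemma Ceven_eq_z2_perp: "Ceven r = z2_perp (2*r) {{}, {..<2*r}}"
  unfolding Ceven_def z2_perp_def using even_wt_iff[of _ r] by (auto simp: Int_absorb2)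

lemma card_Ceven:
  assumes "r \<ge> 1"
  shows "card (Ceven r) = 2 ^ (2*r - 1)"
proof -
  have "z2_subgroup (2*r) {{}, {..<2*r}}"
    unfolding z2_subgroup_def cw_add_def by auto
  moreover have "{..<2*r} \<noteq> {}"
    using assms by (simp add: lessThan_empty_iff)
  then have "card {{}, {..<2*r}} = 2"
    by (metis card_2_iff)
  ultimately have "card (Ceven r) * 2 = 2 ^ (2*r)"
    using card_z2_perp unfolding Ceven_eq_z2_perp by metis
  moreover have "(2::nat) ^ (2*r) = 2 ^ (2*r - 1) * 2"
    using assms by (cases r) auto
  ultimately show ?thesis
    by simp
qed

lemma z2_subgroup_DG:
  assumes "z2_subgroup r G"
  shows "z2_subgroup (2*r) (DG r G)"
  unfolding z2_subgroup_def DG_def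
proof (intro conjI ballI)
  have G: "G \<subseteq> Pow {..<r}" "{} \<in> G" "\<And>a b. a \<in> G \<Longrightarrow> b \<in> G \<Longrightarrow> cw_add a b \<in> G"
    using assms unfolding z2_subgroup_def by auto
  show "Dlt r ` G \<subseteq> Pow {..<2*r}"
    using G(1) Dlt_subset by blast
  show "{} \<in> Dlt r ` G"
    using G(2) Dlt_empty by (metis image_eqI)
  fix a b
  assume "a \<in> Dlt r ` G" "b \<in> Dlt r ` G"
  then obtain x y where "x \<in> G" "y \<in> G" "a = Dlt r x" "b = Dlt r y"
    by auto
  then show "cw_add a b \<in> Dlt r ` G"
    using G Dlt_cw_add[of x r y] by (metis PowD image_eqI subsetD)
qed

lemma card_DG: "z2_subgroup r G \<Longrightarrow> card (DG r G) = card G"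
  unfolding DG_def z2_subgroup_def by (meson card_image inj_on_Dlt inj_on_subset)

lemma card_CG:
  assumes "z2_subgroup r G"
  shows "card (CG r G) = 2 ^ (2*r - z2_dim G)"
proof -
  have prod: "card (CG r G) * 2 ^ z2_dim G = 2 ^ (2*r)"
    using card_z2_perp[OF z2_subgroup_DG[OF assms]] card_DG[OF assms] card_z2_subgroup[OF assms]
    unfolding CG_def perp_eq_z2_perp by simp
  then have "2 ^ z2_dim G \<le> (2::nat) ^ (2*r)"
    by (metis dvd_imp_le dvd_triv_right pos2 zero_less_power)
  then have "(2::nat) ^ (2*r) = 2 ^ (2*r - z2_dim G) * 2 ^ z2_dim G"
    by (simp flip: power_add)
  then show ?thesis
    using prod by simp
qed

lemma z2_subgroup_CG: "z2_subgroup (2*r) (CG r G)"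
  unfolding CG_def perp_eq_z2_perp by (rule z2_subgroup_perp)

lemma CG_subset_Ceven:
  assumes "{..<r} \<in> G"
  shows "CG r G \<subseteq> Ceven r"
proof -
  have "{..<2*r} \<in> DG r G"
    using assms Dlt_lessThan unfolding DG_def by (metis image_eqI)
  then show ?thesis
    unfolding CG_def perp_eq_z2_perp Ceven_eq_z2_perp z2_perp_def by auto
qed

lemma Dlt_in_CG:
  assumes "z2_subgroup r G" "h \<subseteq> {..<r}"
  shows "Dlt r h \<in> CG r G"
proof -
  have "even (card (Dlt r h \<inter> Dlt r g))" if "g \<in> G" for g
  proof -
    have "g \<subseteq> {..<r}"
      using that assms(1) unfolding z2_subgroup_def by blast
    then have "card (Dlt r h \<inter> Dlt r g) = 2 * card (h \<inter> g)"
      using assms(2) Dlt_Int[of h r g] card_Dlt[of "h \<inter> g" r] by auto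
    then show ?thesis
      by simp
  qed
  then show ?thesis
    using Dlt_subset[OF assms(2)] unfolding CG_def perp_eq_z2_perp z2_perp_def DG_def by auto
qed

lemma Dlt_in_Ceven: "h \<subseteq> {..<r} \<Longrightarrow> Dlt r h \<in> Ceven r"
  unfolding Ceven_eq_z2_perp z2_perp_def using Dlt_subset card_Dlt by (auto simp: Int_absorb2)

section \<open>Coordinates in \<open>C^even\<close> and the cocycle \<open>\<epsilon>\<close>\<close>

lemma vb_less: "i < r \<Longrightarrow> vb r i = {i, r + i}"
  unfolding vb_def Dlt_def by auto

lemma vb_ge: "\<not> i < r \<Longrightarrow> vb r i = {i - r, i - r + 1}"
  unfolding vb_def by auto

lemma vb_in_Ceven:
  assumes "i < 2*r - 1"
  shows "vb r i \<in> Ceven r"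
  unfolding Ceven_eq_z2_perp z2_perp_def
  using assms by (cases "i < r") (auto simp: vb_less vb_ge Int_absorb2)

text \<open>Ordering the basis vectors by index, the point \<open>vb_witness r m\<close> lies on \<open>v_m\<close>
  but on no later \<open>v_u\<close>; this triangularity gives independence.\<close>

definition vb_witness :: "nat \<Rightarrow> nat \<Rightarrow> nat" where
  "vb_witness r m = (if m < r then r + m else m - r)"

lemma vb_witness_mem_iff:
  assumes "u < 2*r - 1" "m \<le> u"
  shows "vb_witness r m \<in> vb r u \<longleftrightarrow> u = m"
proof (cases "u < r")
  case True
  then show ?thesis
    using assms(2) by (auto simp: vb_witness_def vb_less)
next
  case False
  then show ?thesis
    using assms by (simp add: vb_witness_def vb_ge) linarith
qed

lemma inj_on_vb: "inj_on (vb r) {..<2*r - 1}"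
proof (rule inj_onI)
  have "i = j" if "i \<le> j" "i < 2*r - 1" "j < 2*r - 1" "vb r i = vb r j" for i j
    using vb_witness_mem_iff[of i r i] vb_witness_mem_iff[of j r i] that by blast
  then show "i = j" if "i \<in> {..<2*r - 1}" "j \<in> {..<2*r - 1}" "vb r i = vb r j" for i j
    using that by (metis lessThan_iff nle_le)
qed

definition vb_sum :: "nat \<Rightarrow> nat set \<Rightarrow> nat set" where
  "vb_sum r S = xsum (vb r ` S)"

lemma vb_sum_cw_add:
  assumes "S \<subseteq> {..<2*r - 1}" "T \<subseteq> {..<2*r - 1}"
  shows "vb_sum r (cw_add S T) = cw_add (vb_sum r S) (vb_sum r T)"
proof -
  have inj: "inj_on (vb r) (S \<union> T)"
    using assms by (intro inj_on_subset[OF inj_on_vb]) auto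
  have "vb r ` (S - T) = vb r ` S - vb r ` T"
    by (rule inj_on_image_set_diff[OF inj]) auto
  moreover have "vb r ` (T - S) = vb r ` T - vb r ` S"
    by (rule inj_on_image_set_diff[OF inj]) auto
  ultimately have "vb r ` cw_add S T = sym_diff (vb r ` S) (vb r ` T)"
    unfolding cw_add_def image_Un by simp
  moreover have "finite S" "finite T"
    using assms finite_subset by auto
  ultimately show ?thesis
    unfolding vb_sum_def by (simp add: xsum_sym_diff)
qed

lemma vb_sum_eq_empty:
  assumes U: "U \<subseteq> {..<2*r - 1}" and "vb_sum r U = {}"
  shows "U = {}"
proof (rule ccontr)
  assume "U \<noteq> {}"
  moreover have fin: "finite U"
    using U finite_subset by auto
  ultimately have m: "Min U \<in> U" "\<And>u. u \<in> U \<Longrightarrow> Min U \<le> u"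
    by auto
  have "{u \<in> U. vb_witness r (Min U) \<in> vb r u} = {Min U}"
    using m U vb_witness_mem_iff[of _ r "Min U"] by auto
  moreover have "{c \<in> vb r ` U. vb_witness r (Min U) \<in> c} = vb r ` {u \<in> U. vb_witness r (Min U) \<in> vb r u}"
    by auto
  ultimately have "{c \<in> vb r ` U. vb_witness r (Min U) \<in> c} = {vb r (Min U)}"
    by simp
  then have "vb_witness r (Min U) \<in> vb_sum r U"
    unfolding vb_sum_def xsum_def by simp
  with \<open>vb_sum r U = {}\<close> show False
    by simp
qed

lemma inj_on_vb_sum: "inj_on (vb_sum r) (Pow {..<2*r - 1})"
proof (rule inj_onI)
  fix S T
  assume "S \<in> Pow {..<2*r - 1}" "T \<in> Pow {..<2*r - 1}" "vb_sum r S = vb_sum r T"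
  then have "cw_add S T = {}"
    using vb_sum_eq_empty[of "cw_add S T" r] vb_sum_cw_add[of S r T] by (simp add: cw_add_subset)
  then show "S = T"
    unfolding cw_add_def by auto
qed

lemma vb_sum_in_Ceven:
  assumes "S \<subseteq> {..<2*r - 1}"
  shows "vb_sum r S \<in> Ceven r"
proof -
  have "vb r ` S \<subseteq> Ceven r"
    using assms vb_in_Ceven by blast
  moreover have "finite S"
    using assms finite_subset by blast
  ultimately show ?thesis
    unfolding vb_sum_def Ceven_eq_z2_perp by (intro z2_subgroup_xsum[OF z2_subgroup_perp]) auto
qed

lemma vb_sum_image:
  assumes "r \<ge> 1"
  shows "vb_sum r ` Pow {..<2*r - 1} = Ceven r"
proof (rule card_subset_eq)
  show "finite (Ceven r)"
    unfolding Ceven_eq_z2_perp z2_perp_def by (rule finite_subset[of _ "Pow {..<2*r}"]) auto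
  show "vb_sum r ` Pow {..<2*r - 1} \<subseteq> Ceven r"
    using vb_sum_in_Ceven by auto
  show "card (vb_sum r ` Pow {..<2*r - 1}) = card (Ceven r)"
    using inj_on_vb_sum card_Ceven[OF assms] by (simp add: card_image card_Pow)
qed

lemma coords_vb_sum:
  assumes "S \<subseteq> {..<2*r - 1}"
  shows "coords r (vb_sum r S) = S"
  unfolding coords_def
proof (rule the_equality)
  show "S \<subseteq> {..<2*r - 1} \<and> xsum (vb r ` S) = vb_sum r S"
    using assms unfolding vb_sum_def by simp
  fix T
  assume "T \<subseteq> {..<2*r - 1} \<and> xsum (vb r ` T) = vb_sum r S"
  then show "T = S"
    using inj_on_vb_sum assms unfolding vb_sum_def inj_on_def by auto
qed

lemma coords_in_Ceven:
  assumes "r \<ge> 1" "\<alpha> \<in> Ceven r"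
  shows "coords r \<alpha> \<subseteq> {..<2*r - 1}" "vb_sum r (coords r \<alpha>) = \<alpha>"
proof -
  obtain S where "S \<subseteq> {..<2*r - 1}" "\<alpha> = vb_sum r S"
    using vb_sum_image[OF assms(1)] assms(2) by blast
  then show "coords r \<alpha> \<subseteq> {..<2*r - 1}" "vb_sum r (coords r \<alpha>) = \<alpha>"
    using coords_vb_sum by auto
qed

lemma coords_cw_add:
  assumes "r \<ge> 1" "\<alpha> \<in> Ceven r" "\<beta> \<in> Ceven r"
  shows "coords r (cw_add \<alpha> \<beta>) = cw_add (coords r \<alpha>) (coords r \<beta>)"
proof -
  have "vb_sum r (cw_add (coords r \<alpha>) (coords r \<beta>)) = cw_add \<alpha> \<beta>"
    using coords_in_Ceven[OF assms(1,2)] coords_in_Ceven[OF assms(1,3)] by (simp add: vb_sum_cw_add)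
  then show ?thesis
    using coords_vb_sum[of "cw_add (coords r \<alpha>) (coords r \<beta>)" r]
      coords_in_Ceven(1)[OF assms(1,2)] coords_in_Ceven(1)[OF assms(1,3)]
    by (simp add: cw_add_subset)
qed

lemma vb_sum_Dlt:
  assumes "h \<subseteq> {..<r}"
  shows "vb_sum r h = Dlt r h"
proof -
  have "finite h"
    using assms finite_subset by auto
  then show ?thesis
    using assms
  proof (induction h rule: finite_induct)
    case empty
    then show ?case
      by (simp add: vb_sum_def xsum_def)
  next
    case (insert x F)
    have eq: "insert x F = cw_add {x} F"
      using insert(2) unfolding cw_add_def by auto
    have "Dlt r (insert x F) = cw_add (Dlt r {x}) (Dlt r F)"
      unfolding eq using insert(4) by (intro Dlt_cw_add) auto
    moreover have "vb_sum r (insert x F) = cw_add (vb_sum r {x}) (vb_sum r F)"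
      unfolding eq using insert(4) by (intro vb_sum_cw_add) auto
    ultimately show ?case
      using insert by (simp add: vb_sum_def vb_def)
  qed
qed

lemma coords_Dlt: "h \<subseteq> {..<r} \<Longrightarrow> coords r (Dlt r h) = h"
  using coords_vb_sum[of h r] vb_sum_Dlt[of h r] by force

lemma prod_sym_diff:
  fixes f :: "'a \<Rightarrow> 'b::comm_monoid_mult"
  assumes "finite A" "finite B" "\<And>i. f i * f i = 1"
  shows "prod f (sym_diff A B) = prod f A * prod f B"
proof -
  have "prod f A = prod f (A \<inter> B) * prod f (A - B)"
    using prod.Int_Diff[OF assms(1), of f B] by (simp add: Int_commute)
  moreover have "prod f B = prod f (A \<inter> B) * prod f (B - A)"
    using prod.Int_Diff[OF assms(2), of f A] by (simp add: Int_commute)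
  moreover have "prod f (sym_diff A B) = prod f (A - B) * prod f (B - A)"
    using assms(1,2) by (intro prod.union_disjoint) auto
  moreover have "prod f (A \<inter> B) * prod f (A \<inter> B) = 1"
    using assms(3) by (simp flip: prod.distrib)
  ultimately show ?thesis
    by (metis (no_types, lifting) mult.assoc mult.left_commute mult_1_right)
qed

lemma sgnpow_square [simp]: "sgnpow k * sgnpow k = 1"
  unfolding sgnpow_def by simp

lemma eps0_square [simp]: "eps0 r i j * eps0 r i j = 1"
  unfolding eps0_def by simp

lemma eps_square [simp]: "eps r \<alpha> \<beta> * eps r \<alpha> \<beta> = 1"
  unfolding eps_def by (simp flip: prod.distrib)

text \<open>The first \<open>r\<close> basis vectors \<open>\<Delta> e_i\<close> have \<open>|v_i| = 0\<close> and meet every earlier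
  basis vector trivially.\<close>

lemma eps0_less: "i < r \<Longrightarrow> eps0 r i j = 1"
  by (auto simp: eps0_def vb_less wt_def wl_def wr_def sgnpow_def Int_insert_left)

lemma eps_cw_add_left:
  assumes "r \<ge> 1" "\<alpha> \<in> Ceven r" "\<beta> \<in> Ceven r"
  shows "eps r (cw_add \<alpha> \<beta>) \<gamma> = eps r \<alpha> \<gamma> * eps r \<beta> \<gamma>"
  unfolding eps_def coords_cw_add[OF assms] unfolding cw_add_def
  using coords_in_Ceven(1)[OF assms(1,2)] coords_in_Ceven(1)[OF assms(1,3)]
  by (intro prod_sym_diff) (auto intro: finite_subset simp flip: prod.distrib)

lemma eps_cw_add_right:
  assumes "r \<ge> 1" "\<beta> \<in> Ceven r" "\<gamma> \<in> Ceven r"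
  shows "eps r \<alpha> (cw_add \<beta> \<gamma>) = eps r \<alpha> \<beta> * eps r \<alpha> \<gamma>"
  unfolding eps_def coords_cw_add[OF assms] prod.distrib[symmetric] unfolding cw_add_def
  using coords_in_Ceven(1)[OF assms(1,2)] coords_in_Ceven(1)[OF assms(1,3)]
  by (intro prod.cong refl prod_sym_diff) (auto intro: finite_subset)

lemma eps_Dlt_left: "h \<subseteq> {..<r} \<Longrightarrow> eps r (Dlt r h) \<beta> = 1"
  unfolding eps_def coords_Dlt by (auto intro!: prod.neutral eps0_less)

lemma eps_diag_cw_add_Dlt:
  assumes "r \<ge> 1" "\<alpha> \<in> Ceven r" "h \<subseteq> {..<r}"
  shows "eps r (cw_add \<alpha> (Dlt r h)) (cw_add \<alpha> (Dlt r h)) = eps r \<alpha> \<alpha> * eps r \<alpha> (Dlt r h)"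
proof -
  have D: "Dlt r h \<in> Ceven r"
    using assms(3) by (rule Dlt_in_Ceven)
  have "eps r (cw_add \<alpha> (Dlt r h)) (cw_add \<alpha> (Dlt r h))
      = eps r \<alpha> (cw_add \<alpha> (Dlt r h)) * eps r (Dlt r h) (cw_add \<alpha> (Dlt r h))"
    using eps_cw_add_left[OF assms(1,2) D] .
  also have "\<dots> = eps r \<alpha> (cw_add \<alpha> (Dlt r h))"
    using eps_Dlt_left[OF assms(3)] by simp
  also have "\<dots> = eps r \<alpha> \<alpha> * eps r \<alpha> (Dlt r h)"
    using eps_cw_add_right[OF assms(1,2) D] .
  finally show ?thesis .
qed

section \<open>Linear algebra in the space of functions \<open>nat set \<Rightarrow> complex\<close>\<close>

interpretation V: vector_space cscale
  by unfold_locales (auto simp: cscale_def algebra_simps)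

lemma sum_fun_apply: "(\<Sum>a\<in>A. f a) x = (\<Sum>a\<in>A. f a x)"
  by (induction A rule: infinite_finite_induct) auto

lemma cscale_apply [simp]: "cscale c f x = c * f x"
  unfolding cscale_def by simp

lemma independent_if_diagonal:
  fixes F :: "nat set \<Rightarrow> nat set \<Rightarrow> complex"
  assumes fin: "finite N"
    and diag: "\<And>a. a \<in> N \<Longrightarrow> F a a \<noteq> 0"
    and off_diag: "\<And>a b. a \<in> N \<Longrightarrow> b \<in> N \<Longrightarrow> a \<noteq> b \<Longrightarrow> F b a = 0"
  shows "inj_on F N" "V.independent (F ` N)"
proof -
  show inj: "inj_on F N"
    by (rule inj_onI) (metis diag off_diag)
  show "V.independent (F ` N)"
  proof (rule V.independent_if_scalars_zero)
    fix u x
    assume sum0: "(\<Sum>y\<in>F ` N. cscale (u y) y) = 0" and "x \<in> F ` N"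
    then obtain a where a: "a \<in> N" "x = F a"
      by auto
    have "0 = (\<Sum>y\<in>F ` N. cscale (u y) y) a"
      using sum0 by simp
    also have "\<dots> = (\<Sum>b\<in>N. u (F b) * F b a)"
      unfolding sum_fun_apply by (simp add: sum.reindex[OF inj])
    also have "\<dots> = (\<Sum>b\<in>N. if b = a then u (F a) * F a a else 0)"
      by (rule sum.cong) (use a(1) off_diag in auto)
    also have "\<dots> = u (F a) * F a a"
      using fin a(1) by simp
    finally show "u x = 0"
      using a diag by simp
  qed (use fin in simp)
qed

lemma dim_span_e_el:
  assumes "finite C"
  shows "V.dim (V.span (e_el ` C)) = card C"
proof -
  have "inj_on e_el C" "V.independent (e_el ` C)"
    using independent_if_diagonal[OF assms, of e_el] by (auto simp: e_el_def)
  then show ?thesis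
    by (simp add: V.dim_eq_card_independent card_image)
qed

lemma card_non_representatives:
  assumes "finite C"
    and rep: "\<And>a. a \<in> C \<Longrightarrow> rep a \<in> C \<and> q (rep a) = q a"
    and rep_cong: "\<And>a b. q a = q b \<Longrightarrow> rep a = rep b"
  shows "card {a \<in> C. rep a \<noteq> a} = card C - card (q ` C)"
proof -
  define R where "R = {a \<in> C. rep a = a}"
  have "inj_on q R"
    by (rule inj_onI) (metis (mono_tags, lifting) R_def mem_Collect_eq rep_cong)
  moreover have "q ` R = q ` C"
    using rep unfolding R_def by (auto simp: image_iff) (metis rep_cong)
  ultimately have "card R = card (q ` C)"
    by (metis card_image)
  moreover have "{a \<in> C. rep a \<noteq> a} = C - R" "R \<subseteq> C"
    unfolding R_def by auto
  ultimately show ?thesis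
    using assms(1) by (simp add: card_Diff_subset finite_subset)
qed

text \<open>Choosing a representative \<open>rep a\<close> in each fibre of \<open>q\<close>, the differences
  \<open>f a - f (rep a)\<close> with \<open>a \<noteq> rep a\<close> form a basis.\<close>

lemma dim_span_fibre_differences:
  fixes C :: "nat set set" and w :: "nat set \<Rightarrow> complex" and q :: "nat set \<Rightarrow> 'b"
  assumes fin: "finite C" and w: "\<And>a. a \<in> C \<Longrightarrow> w a \<noteq> 0"
  shows "V.dim (V.span {cscale (w a) (e_el a) - cscale (w b) (e_el b) | a b. a \<in> C \<and> b \<in> C \<and> q a = q b})
    = card C - card (q ` C)"
    (is "V.dim (V.span ?D) = _")
proof -
  define f where "f a = cscale (w a) (e_el a)" for a
  define rep where "rep a = (SOME b. b \<in> C \<and> q b = q a)" for a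
  have rep: "rep a \<in> C \<and> q (rep a) = q a" if "a \<in> C" for a
    using someI[of "\<lambda>b. b \<in> C \<and> q b = q a" a] that unfolding rep_def by auto
  have rep_cong: "q a = q b \<Longrightarrow> rep a = rep b" for a b
    unfolding rep_def by simp
  define N where "N = {a \<in> C. rep a \<noteq> a}"
  define F where "F a = f a - f (rep a)" for a
  have "rep b \<noteq> a" if "a \<in> N" "b \<in> N" for a b
    using that rep rep_cong[of a b] unfolding N_def by force
  then have "F b a = (if a = b then w a else 0)" if "a \<in> N" "b \<in> N" for a b
    using that unfolding N_def F_def f_def e_el_def by auto
  then have "inj_on F N" "V.independent (F ` N)"
    using independent_if_diagonal[of N F] fin w unfolding N_def by auto
  then have "V.dim (V.span (F ` N)) = card N"
    by (simp add: V.dim_eq_card_independent card_image)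
  moreover have "V.span (F ` N) = V.span ?D"
  proof
    show "V.span (F ` N) \<subseteq> V.span ?D"
      using rep by (intro V.span_mono) (fastforce simp: N_def F_def f_def)
    have F_span: "F a \<in> V.span (F ` N)" if "a \<in> C" for a
      using that by (cases "a \<in> N") (auto simp: N_def F_def intro: V.span_base V.span_zero)
    have "d \<in> V.span (F ` N)" if "d \<in> ?D" for d
    proof -
      obtain a b where ab: "a \<in> C" "b \<in> C" "q a = q b" "d = f a - f b"
        using \<open>d \<in> ?D\<close> unfolding f_def by blast
      then have "d = F a - F b"
        using rep_cong[OF ab(3)] by (simp add: F_def)
      then show ?thesis
        using F_span[OF ab(1)] F_span[OF ab(2)] by (simp add: V.span_diff)
    qed
    then show "V.span ?D \<subseteq> V.span (F ` N)"
      by (intro V.span_minimal[OF _ V.subspace_span]) blast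
  qed
  ultimately show ?thesis
    using card_non_representatives[OF fin rep rep_cong] unfolding N_def by simp
qed

section \<open>The twisted group algebra and the modules \<open>A_G(d)\<close>\<close>

lemma finite_CG: "finite (CG r G)"
  unfolding CG_def perp_eq_z2_perp z2_perp_def by (rule finite_subset[of _ "Pow {..<2*r}"]) auto

lemma cw_add_CG: "a \<in> CG r G \<Longrightarrow> b \<in> CG r G \<Longrightarrow> cw_add a b \<in> CG r G"
  using z2_subgroup_CG unfolding z2_subgroup_def by blast

lemma TA_eq_span: "TA r G = V.span (e_el ` CG r G)"
proof
  show "V.span (e_el ` CG r G) \<subseteq> TA r G"
    by (rule V.span_minimal) (auto simp: TA_def e_el_def V.subspace_def)
  show "TA r G \<subseteq> V.span (e_el ` CG r G)"
  proof
    fix x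
    assume x: "x \<in> TA r G"
    have "x = (\<Sum>a\<in>CG r G. cscale (x a) (e_el a))"
    proof
      fix b
      have "(\<Sum>a\<in>CG r G. cscale (x a) (e_el a)) b = (\<Sum>a\<in>CG r G. if a = b then x a else 0)"
        unfolding sum_fun_apply by (rule sum.cong) (auto simp: e_el_def)
      then show "x b = (\<Sum>a\<in>CG r G. cscale (x a) (e_el a)) b"
        using x finite_CG by (simp add: TA_def)
    qed
    also have "\<dots> \<in> V.span (e_el ` CG r G)"
      by (intro V.span_sum V.span_scale V.span_base) auto
    finally show "x \<in> V.span (e_el ` CG r G)" .
  qed
qed

lemma dim_TA: "V.dim (TA r G) = card (CG r G)"
  unfolding TA_eq_span by (rule dim_span_e_el[OF finite_CG])

lemma tmult_e_el_right:
  assumes "\<gamma> \<in> CG r G"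
  shows "tmult r G x (e_el \<gamma>) = (\<lambda>b. if b \<in> CG r G then eps r (cw_add b \<gamma>) \<gamma> * x (cw_add b \<gamma>) else 0)"
proof
  fix b
  show "tmult r G x (e_el \<gamma>) b = (if b \<in> CG r G then eps r (cw_add b \<gamma>) \<gamma> * x (cw_add b \<gamma>) else 0)"
  proof (cases "b \<in> CG r G")
    case True
    have "tmult r G x (e_el \<gamma>) b
        = (\<Sum>a\<in>CG r G. if a = cw_add b \<gamma> then eps r a (cw_add b a) * x a else 0)"
      unfolding tmult_def if_P[OF True] by (intro sum.cong) (auto simp: e_el_def cw_add_eq_iff)
    also have "\<dots> = eps r (cw_add b \<gamma>) \<gamma> * x (cw_add b \<gamma>)"
      using cw_add_CG[OF True assms] finite_CG by simp
    finally show ?thesis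
      using True by simp
  qed (simp add: tmult_def)
qed

lemma tmult_e_el_e_el:
  assumes "\<alpha> \<in> CG r G" "\<gamma> \<in> CG r G"
  shows "tmult r G (e_el \<alpha>) (e_el \<gamma>) = cscale (eps r \<alpha> \<gamma>) (e_el (cw_add \<alpha> \<gamma>))"
proof -
  have "cw_add b \<gamma> = \<alpha> \<longleftrightarrow> b = cw_add \<alpha> \<gamma>" for b
    unfolding cw_add_def by auto
  then show ?thesis
    unfolding tmult_e_el_right[OF assms(2)] using cw_add_CG[OF assms] by (auto simp: e_el_def)
qed

lemma tmult_e_el_right_diff:
  assumes "x \<in> TA r G" "\<gamma> \<in> CG r G"
  shows "tmult r G x (e_el \<gamma>) - x
    = (\<Sum>a\<in>CG r G. cscale (x a) (cscale (eps r a \<gamma>) (e_el (cw_add a \<gamma>)) - e_el a))"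
proof
  fix b
  have "cw_add b \<gamma> \<in> CG r G \<longleftrightarrow> b \<in> CG r G"
    using cw_add_CG[OF _ assms(2)] by (metis cw_add_cancel(2))
  moreover have "(\<Sum>a\<in>CG r G. cscale (x a) (cscale (eps r a \<gamma>) (e_el (cw_add a \<gamma>)) - e_el a)) b
      = (\<Sum>a\<in>CG r G. if a = cw_add b \<gamma> then x a * eps r a \<gamma> else 0) - (\<Sum>a\<in>CG r G. if a = b then x a else 0)"
    unfolding sum_fun_apply sum_subtractf[symmetric]
    by (intro sum.cong) (auto simp: e_el_def cw_add_eq_iff right_diff_distrib)
  ultimately show "(tmult r G x (e_el \<gamma>) - x) b
      = (\<Sum>a\<in>CG r G. cscale (x a) (cscale (eps r a \<gamma>) (e_el (cw_add a \<gamma>)) - e_el a)) b"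
    using assms finite_CG by (simp add: tmult_e_el_right TA_def mult.commute)
qed

lemma coset_eq_iff:
  assumes "z2_subgroup n K"
  shows "cw_add a ` K = cw_add b ` K \<longleftrightarrow> cw_add a b \<in> K"
proof
  assume "cw_add a ` K = cw_add b ` K"
  then obtain k where "k \<in> K" "b = cw_add a k"
    using assms unfolding z2_subgroup_def by (metis cw_add_empty(1) image_iff)
  then show "cw_add a b \<in> K"
    by simp
next
  have coset_subset: "cw_add a ` K \<subseteq> cw_add b ` K" if "cw_add a b \<in> K" for a b
  proof
    fix x
    assume "x \<in> cw_add a ` K"
    then obtain k where "k \<in> K" "x = cw_add a k"
      by blast
    then have "x = cw_add b (cw_add (cw_add a b) k)" "cw_add (cw_add a b) k \<in> K"
      using that assms unfolding z2_subgroup_def cw_add_def by auto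
    then show "x \<in> cw_add b ` K"
      by blast
  qed
  assume "cw_add a b \<in> K"
  then show "cw_add a ` K = cw_add b ` K"
    using coset_subset[of a b] coset_subset[of b a] by (simp add: cw_add_comm)
qed

lemma card_cosets:
  assumes K: "z2_subgroup n K" and "finite C" "\<And>a k. a \<in> C \<Longrightarrow> k \<in> K \<Longrightarrow> cw_add a k \<in> C"
  shows "card ((\<lambda>a. cw_add a ` K) ` C) * card K = card C"
proof -
  have "a \<in> cw_add a ` K" for a
    using K unfolding z2_subgroup_def by (metis cw_add_empty(1) image_eqI)
  then have union: "\<Union>((\<lambda>a. cw_add a ` K) ` C) = C"
    using assms(3) by blast
  have "inj_on (cw_add a) K" for a
    by (rule inj_onI) (metis cw_add_cancel(1))
  then have card_coset: "card X = card K" if "X \<in> (\<lambda>a. cw_add a ` K) ` C" for X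
    using that card_image by blast
  have disjoint: "X \<inter> Y = {}"
    if XY: "X \<in> (\<lambda>a. cw_add a ` K) ` C" "Y \<in> (\<lambda>a. cw_add a ` K) ` C" "X \<noteq> Y" for X Y
  proof (rule ccontr)
    obtain a b where X: "X = cw_add a ` K" and Y: "Y = cw_add b ` K"
      using XY(1,2) by blast
    assume "X \<inter> Y \<noteq> {}"
    then obtain k k' where "k \<in> K" "k' \<in> K" "cw_add a k = cw_add b k'"
      unfolding X Y by blast
    then have "cw_add a b = cw_add k k'"
      unfolding cw_add_def by auto
    then show False
      using XY(3) coset_eq_iff[OF K] K \<open>k \<in> K\<close> \<open>k' \<in> K\<close> unfolding X Y z2_subgroup_def by metis
  qed
  have "finite ((\<lambda>a. cw_add a ` K) ` C)" "finite (\<Union>((\<lambda>a. cw_add a ` K) ` C))"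
    using assms(2) union by simp_all
  from card_partition[OF this card_coset disjoint] show ?thesis
    unfolding union by (simp add: mult.commute)
qed

lemma Delta_d_Dlt:
  assumes "g \<subseteq> {..<r}"
  shows "Delta_d r (Dlt r g) = Dlt r ` Pow g"
  using assms Dlt_subset_Dlt_iff[of _ r g] unfolding Delta_d_def by (auto dest: subset_trans)

lemma z2_subgroup_Dlt_Pow:
  assumes "g \<subseteq> {..<r}"
  shows "z2_subgroup (2*r) (Dlt r ` Pow g)"
  unfolding z2_subgroup_def
proof (intro conjI ballI)
  show "Dlt r ` Pow g \<subseteq> Pow {..<2*r}"
    using assms Dlt_subset by blast
  show "{} \<in> Dlt r ` Pow g"
    using Dlt_empty by blast
  fix a b
  assume "a \<in> Dlt r ` Pow g" "b \<in> Dlt r ` Pow g"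
  then obtain x y where "x \<subseteq> g" "y \<subseteq> g" "a = Dlt r x" "b = Dlt r y"
    by blast
  moreover from this have "cw_add a b = Dlt r (cw_add x y)"
    using assms Dlt_cw_add[of x r y] by auto
  ultimately show "cw_add a b \<in> Dlt r ` Pow g"
    using cw_add_subset[of x g y] by blast
qed

lemma card_Dlt_Pow:
  assumes "g \<subseteq> {..<r}"
  shows "card (Dlt r ` Pow g) = 2 ^ card g"
proof -
  have "inj_on (Dlt r) (Pow g)"
    using assms by (intro inj_on_subset[OF inj_on_Dlt]) auto
  moreover have "finite g"
    using assms finite_subset by blast
  ultimately show ?thesis
    by (simp add: card_image card_Pow)
qed

lemma Dlt_Pow_subset_CG: "z2_subgroup r G \<Longrightarrow> g \<subseteq> {..<r} \<Longrightarrow> Dlt r ` Pow g \<subseteq> CG r G"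
  using Dlt_in_CG by blast

definition Dlt_coset :: "nat \<Rightarrow> nat set \<Rightarrow> nat set \<Rightarrow> nat set set" where
  "Dlt_coset r g \<alpha> = cw_add \<alpha> ` Dlt r ` Pow g"

lemma Dlt_coset_eq_iff: "g \<subseteq> {..<r} \<Longrightarrow> Dlt_coset r g \<alpha> = Dlt_coset r g \<beta> \<longleftrightarrow> cw_add \<alpha> \<beta> \<in> Dlt r ` Pow g"
  unfolding Dlt_coset_def by (rule coset_eq_iff[OF z2_subgroup_Dlt_Pow])

definition e_rescaled :: "nat \<Rightarrow> nat set \<Rightarrow> nat set \<Rightarrow> complex" where
  "e_rescaled r \<alpha> = cscale (eps r \<alpha> \<alpha>) (e_el \<alpha>)"

text \<open>In the rescaled basis, right multiplication by \<open>e_\<gamma>\<close> with \<open>\<gamma> \<in> \<Delta> Z_2^r\<close> is a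
  plain translation, because \<open>\<epsilon>(\<gamma>, _) = 1\<close>.\<close>

lemma translate_e_el_Dlt:
  assumes "r \<ge> 1" "\<alpha> \<in> Ceven r" "h \<subseteq> {..<r}"
  shows "cscale (eps r \<alpha> (Dlt r h)) (e_el (cw_add \<alpha> (Dlt r h))) - e_el \<alpha>
    = cscale (eps r \<alpha> \<alpha>) (e_rescaled r (cw_add \<alpha> (Dlt r h)) - e_rescaled r \<alpha>)"
proof -
  have "s * (s * c * u - s * v) = (s * s) * (c * u - v)" for s c u v :: complex
    by (simp add: algebra_simps)
  then show ?thesis
    unfolding e_rescaled_def eps_diag_cw_add_Dlt[OF assms]
    by (intro ext) (simp only: cscale_apply fun_diff_def eps_square mult_1)
qed

locale all_ones_subgroup =
  fixes r :: nat and G :: "nat set set"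
  assumes r_pos: "r \<ge> 1" and subgroup: "z2_subgroup r G" and all_ones: "{..<r} \<in> G"
begin

abbreviation coset_differences :: "nat set \<Rightarrow> (nat set \<Rightarrow> complex) set" where
  "coset_differences g \<equiv> {e_rescaled r a - e_rescaled r b | a b.
     a \<in> CG r G \<and> b \<in> CG r G \<and> Dlt_coset r g a = Dlt_coset r g b}"

lemma translate_e_el_CG:
  assumes "\<alpha> \<in> CG r G" "\<gamma> \<in> Dlt r ` Pow g" "g \<subseteq> {..<r}"
  shows "cscale (eps r \<alpha> \<gamma>) (e_el (cw_add \<alpha> \<gamma>)) - e_el \<alpha>
    = cscale (eps r \<alpha> \<alpha>) (e_rescaled r (cw_add \<alpha> \<gamma>) - e_rescaled r \<alpha>)"
  using assms translate_e_el_Dlt[OF r_pos] CG_subset_Ceven[OF all_ones] by (auto dest: subset_trans)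

lemma rel_A_Dlt_subset:
  assumes g: "g \<subseteq> {..<r}"
  shows "rel_A r G (Dlt r g) \<subseteq> V.span (coset_differences g)"
  unfolding rel_A_def Delta_d_Dlt[OF g]
proof (rule V.span_minimal[OF _ V.subspace_span], rule subsetI)
  fix w
  assume "w \<in> {tmult r G x (e_el \<gamma>) - x | x \<gamma>. x \<in> TA r G \<and> \<gamma> \<in> Dlt r ` Pow g}"
  then obtain x \<gamma> where w: "w = tmult r G x (e_el \<gamma>) - x" and x: "x \<in> TA r G" and \<gamma>: "\<gamma> \<in> Dlt r ` Pow g"
    by blast
  have \<gamma>C: "\<gamma> \<in> CG r G"
    using Dlt_Pow_subset_CG[OF subgroup g] \<gamma> by blast
  have "cw_add (cw_add a \<gamma>) a = \<gamma>" for a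
    unfolding cw_add_def by auto
  then have "Dlt_coset r g (cw_add a \<gamma>) = Dlt_coset r g a" for a
    using \<gamma> Dlt_coset_eq_iff[OF g] by simp
  then have "cscale (eps r a a) (e_rescaled r (cw_add a \<gamma>) - e_rescaled r a) \<in> V.span (coset_differences g)"
    if "a \<in> CG r G" for a
    using that cw_add_CG[OF that \<gamma>C] by (intro V.span_scale V.span_base) blast
  then show "w \<in> V.span (coset_differences g)"
    unfolding w tmult_e_el_right_diff[OF x \<gamma>C]
    by (intro V.span_sum V.span_scale) (simp add: translate_e_el_CG[OF _ \<gamma> g])
qed

lemma coset_differences_subset_rel_A:
  assumes g: "g \<subseteq> {..<r}"
  shows "coset_differences g \<subseteq> rel_A r G (Dlt r g)"
proof safe
  fix a b
  assume a: "a \<in> CG r G" and b: "b \<in> CG r G" and "Dlt_coset r g a = Dlt_coset r g b"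
  then have \<gamma>: "cw_add b a \<in> Dlt r ` Pow g"
    using Dlt_coset_eq_iff[OF g, of b a] by simp
  then have \<gamma>C: "cw_add b a \<in> CG r G"
    using Dlt_Pow_subset_CG[OF subgroup g] by blast
  have "e_el b \<in> TA r G"
    using b by (simp add: TA_def e_el_def)
  then have "tmult r G (e_el b) (e_el (cw_add b a)) - e_el b \<in> rel_A r G (Dlt r g)"
    unfolding rel_A_def Delta_d_Dlt[OF g] using \<gamma> by (intro V.span_base) blast
  moreover have "e_rescaled r a - e_rescaled r b
      = cscale (eps r b b) (tmult r G (e_el b) (e_el (cw_add b a)) - e_el b)"
    using translate_e_el_CG[OF b \<gamma> g] tmult_e_el_e_el[OF b \<gamma>C] eps_square[of r b b]
    by (simp add: V.scale_right_diff_distrib)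
  ultimately show "e_rescaled r a - e_rescaled r b \<in> rel_A r G (Dlt r g)"
    unfolding rel_A_def by (simp add: V.span_scale)
qed

lemma dim_A_Dlt:
  assumes g: "g \<subseteq> {..<r}"
  shows "real (dim_A r G (Dlt r g)) = real (card (CG r G)) / 2 ^ card g"
proof -
  have cosets: "card (Dlt_coset r g ` CG r G) * 2 ^ card g = card (CG r G)"
    using card_cosets[OF z2_subgroup_Dlt_Pow[OF g] finite_CG] Dlt_Pow_subset_CG[OF subgroup g] cw_add_CG
    unfolding card_Dlt_Pow[OF g] Dlt_coset_def[abs_def] by blast
  have "V.span (coset_differences g) \<subseteq> rel_A r G (Dlt r g)"
    using coset_differences_subset_rel_A[OF g] unfolding rel_A_def by (rule V.span_minimal[OF _ V.subspace_span])
  with rel_A_Dlt_subset[OF g] have "rel_A r G (Dlt r g) = V.span (coset_differences g)"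
    by (rule subset_antisym)
  have "V.dim (rel_A r G (Dlt r g)) = card (CG r G) - card (Dlt_coset r g ` CG r G)"
    unfolding \<open>rel_A r G (Dlt r g) = _\<close> e_rescaled_def
    by (rule dim_span_fibre_differences[OF finite_CG, where w = "\<lambda>a. eps r a a"])
      (metis eps_square mult_zero_left zero_neq_one)
  moreover have "card (Dlt_coset r g ` CG r G) \<le> card (Dlt_coset r g ` CG r G) * 2 ^ card g"
    by simp
  then have "card (Dlt_coset r g ` CG r G) \<le> card (CG r G)"
    unfolding cosets .
  ultimately have "dim_A r G (Dlt r g) = card (Dlt_coset r g ` CG r G)"
    unfolding dim_A_def dim_TA by simp
  moreover have "real (card (Dlt_coset r g ` CG r G)) * 2 ^ card g = real (card (CG r G))"
    using cosets by (metis of_nat_mult of_nat_numeral of_nat_power)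
  ultimately show ?thesis
    by (simp add: field_simps)
qed

end

lemma PG_eq_sum:
  assumes "G \<subseteq> Pow {..<r}"
  shows "PG r G t = (\<Sum>g\<in>G. t ^ card g)"
proof -
  have fin: "finite G"
    using assms by (meson finite_Pow_iff finite_lessThan finite_subset)
  have "card g \<le> r" if "g \<in> G" for g
    using that assms card_mono[OF finite_lessThan, of g r] by auto
  then have "card ` G \<subseteq> {0..r}"
    by auto
  have "(\<Sum>g\<in>G. t ^ card g) = (\<Sum>k=0..r. \<Sum>g\<in>{g \<in> G. card g = k}. t ^ card g)"
    using sum.group[OF fin finite_atLeastAtMost \<open>card ` G \<subseteq> {0..r}\<close>, of "\<lambda>g. t ^ card g"] by simp
  also have "\<dots> = PG r G t"
    unfolding PG_def Nk_def by (intro sum.cong) auto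
  finally show ?thesis ..
qed

theorem mainTheorem16:
  fixes r :: nat and G :: "nat set set"
  assumes "r \<ge> 1"
    and "z2_subgroup r G"
    and "{..<r} \<in> G"
  shows "real (dim_S r G) = 2 ^ (2*r - z2_dim G) * PG r G (1/2)"
proof -
  interpret all_ones_subgroup r G
    using assms by unfold_locales
  have G: "G \<subseteq> Pow {..<r}"
    using assms(2) unfolding z2_subgroup_def by blast
  have "real (dim_S r G) = (\<Sum>g\<in>G. real (dim_A r G (Dlt r g)))"
    unfolding dim_S_def DG_def using G by (simp add: sum.reindex inj_on_subset[OF inj_on_Dlt])
  also have "\<dots> = real (card (CG r G)) * (\<Sum>g\<in>G. (1/2) ^ card g)"
    unfolding sum_distrib_left using G by (intro sum.cong refl) (auto simp: dim_A_Dlt power_one_over)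
  also have "\<dots> = 2 ^ (2*r - z2_dim G) * PG r G (1/2)"
    using card_CG[OF assms(2)] PG_eq_sum[OF G] by simp
  finally show ?thesis .
qed

end
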